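(* Consider the single-asset setting of the context with $\alpha\Sigma>0$, and regard all quantities as functions of $\theta\ge0$ with the other parameters fixed. (i) For $t\in[0,T)$, $C(t;\theta)$ is strictly decreasing in $\theta$. (ii) For $x>0$ and $t\in[0,T)$, $\xi^*(t,x;\theta)$ is strictly decreasing in $\theta$. (iii) For $x>0$ and $t\in(0,T)$, $\tilde X(t;\theta)$ is strictly increasing in $\theta$. (iv) For $x>0$ and $t\in(0,T)$, $\mathbb{E}[X^*(t;\theta)]$ is strictly decreasing in $\theta$. (v) The risk costs $\alpha\Sigma\cdot\mathbb{E}\big[\int_0^TX^*(t;\theta)^2dt\big]$ are strictly decreasing in $\theta$. (vi) The impact costs $\Lambda\cdot\mathbb{E}\big[\int_0^T\xi^*(t,X^*(t;\theta);\theta)^2dt\big]$ are strictly decreasing in $\theta$.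
   Context: Single-asset setting: $T>0$, price impact $\Lambda>0$, variance $\Sigma\ge0$, risk aversion $\alpha\ge0$ (scalars), dark pool execution modeled by a Poisson process $\pi$ with intensity $\theta\ge0$. Let $\tilde\theta:=\sqrt{\theta^2+4\alpha\Sigma/\Lambda}$ and for $t\in[0,T)$ $$C(t;\theta)=\frac{\Lambda\tilde\theta}{2}\coth\Big(\frac{\tilde\theta}{2}(T-t)\Big)-\frac{\Lambda\theta}{2}\ \text{ if }\theta>0\text{ or }\alpha\Sigma>0,\qquad C(t;\theta)=\frac{\Lambda}{T-t}\ \text{ otherwise};$$ $C(t;\theta)x^2$ is the minimal expected cost of liquidating position $x$ over $[t,T)$. The optimal strategy trades at the exchange at rate $\xi^*(t,x;\theta)=C(t;\theta)x/\Lambda$ and (for $\theta>0$) places the whole remaining position in the dark pool. Given initial position $x$ at time $0$, $\tilde X(t;\theta):=x\exp\big(-\int_0^tC(s;\theta)/\Lambda\,ds\big)$ is the trajectory before dark pool execution, and the optimally controlled position is $X^*(t;\theta)=\tilde X(t;\theta)$ for $t<\tau$ and $X^*(t;\theta)=0$ for $t\ge\tau$, where $\tau$ is the first jump time of $\pi$ (for $\theta=0$, $\tau=\infty$). *)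

theory Defs
  imports "HOL-Probability.Probability"
begin

text \<open>Single-asset optimal liquidation with a dark pool (Poisson execution with intensity theta).
  Parameters: horizon T, price impact Lam, variance Sig, risk aversion alpha.\<close>

definition theta_tilde :: "real \<Rightarrow> real \<Rightarrow> real \<Rightarrow> real \<Rightarrow> real" where
  "theta_tilde Lam Sig alpha theta = sqrt (theta\<^sup>2 + 4 * alpha * Sig / Lam)"

definition coth :: "real \<Rightarrow> real" where
  "coth y = cosh y / sinh y"

definition Cfun :: "real \<Rightarrow> real \<Rightarrow> real \<Rightarrow> real \<Rightarrow> real \<Rightarrow> real \<Rightarrow> real" where
  "Cfun T Lam Sig alpha theta t =
     (if theta > 0 \<or> alpha * Sig > 0
      then Lam * theta_tilde Lam Sig alpha theta / 2
             * coth (theta_tilde Lam Sig alpha theta / 2 * (T - t)) - Lam * theta / 2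
      else Lam / (T - t))"

definition xi_star :: "real \<Rightarrow> real \<Rightarrow> real \<Rightarrow> real \<Rightarrow> real \<Rightarrow> real \<Rightarrow> real \<Rightarrow> real" where
  "xi_star T Lam Sig alpha theta t x = Cfun T Lam Sig alpha theta t * x / Lam"

definition X_tilde :: "real \<Rightarrow> real \<Rightarrow> real \<Rightarrow> real \<Rightarrow> real \<Rightarrow> real \<Rightarrow> real \<Rightarrow> real" where
  "X_tilde T Lam Sig alpha x theta t =
     x * exp (- integral {0..t} (\<lambda>s. Cfun T Lam Sig alpha theta s / Lam))"

text \<open>optimally controlled position, given the first jump time tau of the Poisson process
  (tau = infinity is allowed, e.g. theta = 0)\<close>
definition X_star :: "real \<Rightarrow> real \<Rightarrow> real \<Rightarrow> real \<Rightarrow> real \<Rightarrow> real \<Rightarrow> ereal \<Rightarrow> real \<Rightarrow> real" where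
  "X_star T Lam Sig alpha x theta tau t =
     (if ereal t < tau then X_tilde T Lam Sig alpha x theta t else 0)"

text \<open>tau is (distributed as) the first jump time of a Poisson process with intensity theta
  on the probability space M: P(tau > t) = exp(- theta t) for all t \<ge> 0
  (for theta = 0 this means tau = infinity almost surely).\<close>
definition first_jump_time :: "'a measure \<Rightarrow> ('a \<Rightarrow> ereal) \<Rightarrow> real \<Rightarrow> bool" where
  "first_jump_time M tau theta \<longleftrightarrow>
     prob_space M \<and> tau \<in> borel_measurable M \<and>
     (\<forall>t\<ge>0. measure M {\<omega> \<in> space M. ereal t < tau \<omega>} = exp (- theta * t))"

definition expected_position :: "real \<Rightarrow> real \<Rightarrow> real \<Rightarrow> real \<Rightarrow> real \<Rightarrow> real \<Rightarrow> 'a measure \<Rightarrow> ('a \<Rightarrow> ereal) \<Rightarrow> real \<Rightarrow> real" where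
  "expected_position T Lam Sig alpha x theta M tau t =
     (\<integral>\<omega>. X_star T Lam Sig alpha x theta (tau \<omega>) t \<partial>M)"

definition risk_costs :: "real \<Rightarrow> real \<Rightarrow> real \<Rightarrow> real \<Rightarrow> real \<Rightarrow> real \<Rightarrow> 'a measure \<Rightarrow> ('a \<Rightarrow> ereal) \<Rightarrow> real" where
  "risk_costs T Lam Sig alpha x theta M tau =
     alpha * Sig * (\<integral>\<omega>. (LBINT t:{0..<T}. (X_star T Lam Sig alpha x theta (tau \<omega>) t)\<^sup>2) \<partial>M)"

definition impact_costs :: "real \<Rightarrow> real \<Rightarrow> real \<Rightarrow> real \<Rightarrow> real \<Rightarrow> real \<Rightarrow> 'a measure \<Rightarrow> ('a \<Rightarrow> ereal) \<Rightarrow> real" where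
  "impact_costs T Lam Sig alpha x theta M tau =
     Lam * (\<integral>\<omega>. (LBINT t:{0..<T}.
        (xi_star T Lam Sig alpha theta t (X_star T Lam Sig alpha x theta (tau \<omega>) t))\<^sup>2) \<partial>M)"

end

theory Submission
  imports Defs
begin

text \<open>Write \<open>C / \<Lambda> = (K - \<theta>) / 2\<close> with \<open>K = \<theta>' coth (\<theta>' (T - t) / 2)\<close> and
  \<open>\<theta>' = sqrt (\<theta>\<^sup>2 + 4 \<alpha> \<Sigma> / \<Lambda>)\<close>. Since \<open>v coth v\<close> increases, \<open>K\<close> increases with \<open>\<theta>\<close>; since
  \<open>\<theta>' - \<theta>\<close> and \<open>w / (exp w - 1)\<close> both decrease, \<open>K - \<theta>\<close> decreases. The trajectory, the expected
  position and the risk density are \<open>x\<close> or \<open>x\<^sup>2\<close> times the exponential of minus a time integral of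
  \<open>(K + c \<theta>) / 2\<close> with \<open>c \<in> {-1, 1, 0}\<close>, the dark pool contributing the survival factor
  \<open>exp (- \<theta> t)\<close>; the impact density is the risk density times \<open>(C / \<Lambda>)\<^sup>2\<close>. Fubini turns the
  expected costs into time integrals of these densities.\<close>

lemma x_lt_sinh_mult_cosh:
  fixes y :: real assumes "y > 0" shows "y < sinh y * cosh y"
proof -
  have "y \<le> sinh y" using real_le_x_sinh[of y] assms by (simp add: sinh_field_def exp_minus)
  moreover have "cosh y > 1" using cosh_real_ge_1[of y] cosh_real_one_iff[of y] assms by linarith
  ultimately have "y * 1 < sinh y * cosh y"
    using assms by (intro mult_le_less_imp_less) auto
  then show ?thesis by simp
qed

lemma mult_coth_strict_mono:
  fixes v1 v2 :: real assumes "0 < v1" "v1 < v2"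
  shows "v1 * coth v1 < v2 * coth v2"
proof -
  have "(\<lambda>v. v * cosh v / sinh v) v1 < (\<lambda>v. v * cosh v / sinh v) v2"
  proof (rule DERIV_pos_imp_increasing[OF assms(2)])
    fix v :: real assume "v1 \<le> v" "v \<le> v2"
    then have "v > 0" using assms by linarith
    then have s: "sinh v > 0" by simp
    have "((\<lambda>v. v * cosh v / sinh v) has_real_derivative (sinh v * cosh v - v) / (sinh v)\<^sup>2) (at v)"
    proof -
      have "((\<lambda>v. v * cosh v / sinh v) has_real_derivative
              ((cosh v + v * sinh v) * sinh v - v * cosh v * cosh v) / (sinh v * sinh v)) (at v)"
        using s by (auto intro!: derivative_eq_intros)
      moreover have "(cosh v + v * sinh v) * sinh v - v * cosh v * cosh v = sinh v * cosh v - v"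
        using cosh_square_eq[of v] by (simp add: algebra_simps power2_eq_square)
      ultimately show ?thesis by (simp add: power2_eq_square)
    qed
    moreover have "(sinh v * cosh v - v) / (sinh v)\<^sup>2 > 0"
      using x_lt_sinh_mult_cosh[OF \<open>v > 0\<close>] s by simp
    ultimately show "\<exists>y. ((\<lambda>v. v * cosh v / sinh v) has_real_derivative y) (at v) \<and> 0 < y"
      by blast
  qed
  then show ?thesis by (simp add: coth_def)
qed

lemma coth_eq_exp:
  fixes v :: real assumes "v > 0" shows "coth v = 1 + 2 / (exp (2 * v) - 1)"
proof -
  have "exp v > 1" using assms by simp
  then have "exp v * exp v > 1" by (metis less_1_mult)
  then show ?thesis
    unfolding coth_def sinh_field_def cosh_field_def exp_minus mult_2 exp_add
    using \<open>exp v > 1\<close> by (simp add: field_simps)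
qed

lemma divide_exp_minus_one_antimono:
  fixes w1 w2 :: real assumes "0 < w1" "w1 \<le> w2"
  shows "w2 / (exp w2 - 1) \<le> w1 / (exp w1 - 1)"
proof -
  define d where "d = w2 - w1"
  have "exp w1 * (1 - w1) \<le> 1"
    using mult_left_mono[OF exp_ge_add_one_self[of "-w1"], of "exp w1"] by (simp add: exp_minus)
  moreover have "w1 * (exp w1 * (1 + d) - 1) - w2 * (exp w1 - 1) = d * (1 - exp w1 * (1 - w1))"
    by (simp add: d_def algebra_simps)
  ultimately have "w1 * (exp w1 * (1 + d) - 1) - w2 * (exp w1 - 1) \<ge> 0"
    using assms by (simp add: d_def)
  moreover have "w1 * (exp w1 * (1 + d)) \<le> w1 * exp w2"
  proof -
    have "exp w1 * (1 + d) \<le> exp w1 * exp d" using exp_ge_add_one_self[of d] by simp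
    also have "\<dots> = exp w2" by (simp add: d_def flip: exp_add)
    finally show ?thesis using assms by simp
  qed
  ultimately have "w2 * (exp w1 - 1) \<le> w1 * (exp w2 - 1)" by (simp add: algebra_simps)
  moreover have "exp w1 > 1" "exp w2 > 1" using assms by auto
  ultimately show ?thesis by (simp add: field_simps)
qed

lemma set_integral_Ico_eq_integral:
  fixes f :: "real \<Rightarrow> real"
  assumes "a \<le> b" "continuous_on {a..b} f"
  shows "(LBINT t:{a..<b}. f t) = integral {a..b} f"
proof -
  have "(LBINT t:{a..<b}. f t) = (LBINT t:{a..b}. f t)"
    using interval_integral_Ico[of a b f] interval_integral_Icc[of a b f] assms(1) by simp
  also have "\<dots> = integral {a..b} f"
    by (rule set_borel_integral_eq_integral(2)[OF borel_integrable_atLeastAtMost'[OF assms(2)]])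
  finally show ?thesis .
qed

lemma first_jump_time_expectation_survival:
  assumes "first_jump_time M \<tau> \<theta>" "t \<ge> 0"
  shows "(\<integral>\<omega>. (if ereal t < \<tau> \<omega> then c else 0) \<partial>M) = c * exp (- \<theta> * t)"
proof -
  interpret prob_space M using assms(1) by (simp add: first_jump_time_def)
  have [measurable]: "\<tau> \<in> borel_measurable M" using assms(1) by (simp add: first_jump_time_def)
  have "(\<integral>\<omega>. (if ereal t < \<tau> \<omega> then c else 0) \<partial>M)
      = (\<integral>\<omega>. c * indicator {\<omega> \<in> space M. ereal t < \<tau> \<omega>} \<omega> \<partial>M)"
    by (rule Bochner_Integration.integral_cong) (auto simp: indicator_def)
  also have "\<dots> = c * measure M {\<omega> \<in> space M. ereal t < \<tau> \<omega>}" by simp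
  finally show ?thesis using assms by (simp add: first_jump_time_def)
qed

lemma first_jump_time_expectation_integral:
  fixes F :: "real \<Rightarrow> real"
  assumes fj: "first_jump_time M \<tau> \<theta>" and F: "continuous_on UNIV F" and T: "T > 0"
  shows "(\<integral>\<omega>. (LBINT t:{0..<T}. (if ereal t < \<tau> \<omega> then F t else 0)) \<partial>M)
        = integral {0..T} (\<lambda>t. F t * exp (- \<theta> * t))"
proof -
  interpret prob_space M using fj by (simp add: first_jump_time_def)
  have [measurable]: "\<tau> \<in> borel_measurable M" using fj by (simp add: first_jump_time_def)
  have [measurable]: "F \<in> borel_measurable borel" by (rule borel_measurable_continuous_onI[OF F])
  interpret P: pair_sigma_finite M lborel by unfold_locales
  define g where "g \<omega> t = indicator {0..<T} t * (if ereal t < \<tau> \<omega> then F t else 0)" for \<omega> t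
  obtain B where B: "\<And>t. t \<in> {0..T} \<Longrightarrow> norm (F t) \<le> B"
    using compact_imp_bounded[OF compact_continuous_image[OF continuous_on_subset[OF F] compact_Icc]]
    unfolding bounded_iff by (metis image_eqI subset_UNIV)
  have "integrable (M \<Otimes>\<^sub>M lborel) (case_prod g)"
  proof (rule integrableI_bounded_set[where A="space M \<times> {0..<T}" and B=B])
    show "case_prod g \<in> borel_measurable (M \<Otimes>\<^sub>M lborel)"
      unfolding g_def by measurable
    show "emeasure (M \<Otimes>\<^sub>M lborel) (space M \<times> {0..<T}) < \<infinity>"
      using T by (subst lborel.emeasure_pair_measure_Times) (auto simp: emeasure_space_1)
    have "0 \<le> B" using B[of 0] T by (meson atLeastAtMost_iff norm_ge_zero order.trans less_imp_le order_refl)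
    then show "AE x in M \<Otimes>\<^sub>M lborel. x \<in> space M \<times> {0..<T} \<longrightarrow> norm (case_prod g x) \<le> B"
      using B by (intro AE_I2) (auto simp: g_def indicator_def)
    show "AE x in M \<Otimes>\<^sub>M lborel. x \<notin> space M \<times> {0..<T} \<longrightarrow> case_prod g x = 0"
      by (auto simp: g_def indicator_def space_pair_measure)
  qed (measurable)
  then have "(\<integral>\<omega>. (\<integral>t. g \<omega> t \<partial>lborel) \<partial>M) = (\<integral>t. (\<integral>\<omega>. g \<omega> t \<partial>M) \<partial>lborel)"
    by (rule P.Fubini_integral[symmetric])
  also have "\<dots> = (\<integral>t. indicator {0..<T} t * (F t * exp (- \<theta> * t)) \<partial>lborel)"
    by (rule Bochner_Integration.integral_cong)
       (auto simp: g_def first_jump_time_expectation_survival[OF fj] indicator_def)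
  also have "\<dots> = (LBINT t:{0..<T}. F t * exp (- \<theta> * t))"
    by (simp add: set_lebesgue_integral_def)
  also have "\<dots> = integral {0..T} (\<lambda>t. F t * exp (- \<theta> * t))"
    using T by (intro set_integral_Ico_eq_integral) (auto intro!: continuous_intros continuous_on_subset[OF F])
  finally show ?thesis by (simp add: set_lebesgue_integral_def g_def)
qed

locale dark_pool =
  fixes T Lam Sig alpha :: real
  assumes T_pos: "T > 0" and Lam_pos: "Lam > 0" and risk_pos: "alpha * Sig > 0"
begin

abbreviation th_tilde :: "real \<Rightarrow> real" where
  "th_tilde \<theta> \<equiv> theta_tilde Lam Sig alpha \<theta>"

lemma theta_tilde_square: "(th_tilde \<theta>)\<^sup>2 = \<theta>\<^sup>2 + 4 * alpha * Sig / Lam"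
  using risk_pos Lam_pos by (simp add: theta_tilde_def add_nonneg_pos mult.assoc)

lemma theta_tilde_pos: "th_tilde \<theta> > 0"
  using risk_pos Lam_pos by (simp add: theta_tilde_def add_nonneg_pos mult.assoc)

lemma theta_tilde_gt: "0 \<le> \<theta> \<Longrightarrow> \<theta> < th_tilde \<theta>"
proof (rule power2_less_imp_less)
  show "\<theta>\<^sup>2 < (th_tilde \<theta>)\<^sup>2"
    using theta_tilde_square[of \<theta>] risk_pos Lam_pos by (simp add: mult.assoc)
qed (use theta_tilde_pos[of \<theta>] in simp)

lemma theta_tilde_strict_mono: "0 \<le> \<theta>1 \<Longrightarrow> \<theta>1 < \<theta>2 \<Longrightarrow> th_tilde \<theta>1 < th_tilde \<theta>2"
proof (rule power2_less_imp_less)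
  assume "0 \<le> \<theta>1" "\<theta>1 < \<theta>2"
  then have "\<theta>1\<^sup>2 < \<theta>2\<^sup>2" by (simp add: power_strict_mono)
  then show "(th_tilde \<theta>1)\<^sup>2 < (th_tilde \<theta>2)\<^sup>2" by (simp add: theta_tilde_square)
qed (use theta_tilde_pos[of \<theta>2] in simp)

text \<open>\<open>th_tilde\<^sup>2 - \<theta>\<^sup>2\<close> does not depend on \<open>\<theta>\<close>, so \<open>th_tilde - \<theta> = (th_tilde\<^sup>2 - \<theta>\<^sup>2) / (th_tilde + \<theta>)\<close>
  decreases.\<close>
lemma theta_tilde_minus_strict_antimono:
  assumes "0 \<le> \<theta>1" "\<theta>1 < \<theta>2"
  shows "th_tilde \<theta>2 - \<theta>2 < th_tilde \<theta>1 - \<theta>1"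
proof -
  define a where "a = 4 * alpha * Sig / Lam"
  have a: "a > 0" using risk_pos Lam_pos by (simp add: a_def mult.assoc)
  have diff: "th_tilde \<theta> - \<theta> = a / (th_tilde \<theta> + \<theta>)" if "0 \<le> \<theta>" for \<theta>
  proof -
    have "(th_tilde \<theta> - \<theta>) * (th_tilde \<theta> + \<theta>) = a"
      using theta_tilde_square[of \<theta>] by (simp add: a_def algebra_simps power2_eq_square)
    moreover have "th_tilde \<theta> + \<theta> > 0" using theta_tilde_pos[of \<theta>] that by simp
    ultimately show ?thesis by (simp add: eq_divide_eq)
  qed
  have "0 < th_tilde \<theta>1 + \<theta>1" "th_tilde \<theta>1 + \<theta>1 < th_tilde \<theta>2 + \<theta>2"
    using theta_tilde_pos[of \<theta>1] theta_tilde_strict_mono[OF assms] assms by auto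
  then have "a / (th_tilde \<theta>2 + \<theta>2) < a / (th_tilde \<theta>1 + \<theta>1)"
    using a by (simp add: divide_strict_left_mono mult_pos_pos)
  then show ?thesis using diff assms by simp
qed

definition K :: "real \<Rightarrow> real \<Rightarrow> real" where
  "K \<theta> t = th_tilde \<theta> * coth (th_tilde \<theta> * (T - t) / 2)"

lemma Cfun_eq_K: "Cfun T Lam Sig alpha \<theta> t = Lam * (K \<theta> t - \<theta>) / 2"
  using risk_pos by (simp add: Cfun_def K_def algebra_simps)

lemma K_strict_mono:
  assumes "0 \<le> \<theta>1" "\<theta>1 < \<theta>2" "t < T"
  shows "K \<theta>1 t < K \<theta>2 t"
proof -
  define c where "c = (T - t) / 2"
  have "c > 0" using assms(3) by (simp add: c_def)
  have "th_tilde \<theta>1 * c * coth (th_tilde \<theta>1 * c) < th_tilde \<theta>2 * c * coth (th_tilde \<theta>2 * c)"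
    using \<open>c > 0\<close> theta_tilde_pos theta_tilde_strict_mono[OF assms(1,2)]
    by (intro mult_coth_strict_mono) auto
  then show ?thesis using \<open>c > 0\<close> by (simp add: K_def c_def mult.assoc mult.commute[of c])
qed

text \<open>By \<open>coth v = 1 + 2 / (exp (2 v) - 1)\<close>, \<open>K - \<theta>\<close> splits into \<open>th_tilde - \<theta>\<close> and a multiple
  of \<open>w / (exp w - 1)\<close> with \<open>w = th_tilde (T - t)\<close>, both decreasing in \<open>\<theta>\<close>.\<close>
lemma K_minus_strict_antimono:
  assumes "0 \<le> \<theta>1" "\<theta>1 < \<theta>2" "t < T"
  shows "K \<theta>2 t - \<theta>2 < K \<theta>1 t - \<theta>1"
proof -
  define c where "c = T - t"
  have c: "c > 0" using assms(3) by (simp add: c_def)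
  have split: "K \<theta> t - \<theta> = (th_tilde \<theta> - \<theta>) + 2 / c * ((th_tilde \<theta> * c) / (exp (th_tilde \<theta> * c) - 1))" for \<theta>
  proof -
    have "th_tilde \<theta> * c > 0" using theta_tilde_pos c by simp
    moreover have "exp (th_tilde \<theta> * c) - 1 \<noteq> 0" using theta_tilde_pos[of \<theta>] c by simp
    moreover have "K \<theta> t = th_tilde \<theta> * (1 + 2 / (exp (th_tilde \<theta> * c) - 1))"
      using coth_eq_exp[of "th_tilde \<theta> * c / 2"] \<open>th_tilde \<theta> * c > 0\<close> by (simp add: K_def c_def)
    ultimately show ?thesis using c by (simp add: field_simps)
  qed
  have "(th_tilde \<theta>2 * c) / (exp (th_tilde \<theta>2 * c) - 1) \<le> (th_tilde \<theta>1 * c) / (exp (th_tilde \<theta>1 * c) - 1)"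
    using theta_tilde_pos[of \<theta>1] theta_tilde_strict_mono[OF assms(1,2)] c
    by (intro divide_exp_minus_one_antimono) auto
  then have "2 / c * ((th_tilde \<theta>2 * c) / (exp (th_tilde \<theta>2 * c) - 1))
      \<le> 2 / c * ((th_tilde \<theta>1 * c) / (exp (th_tilde \<theta>1 * c) - 1))"
    by (rule mult_left_mono) (use c in simp)
  then show ?thesis
    using split[of \<theta>1] split[of \<theta>2] theta_tilde_minus_strict_antimono[OF assms(1,2)] by linarith
qed

lemma K_minus_pos:
  assumes "0 \<le> \<theta>" "t < T"
  shows "K \<theta> t - \<theta> > 0"
proof -
  have "th_tilde \<theta> * (T - t) / 2 > 0" using theta_tilde_pos[of \<theta>] assms(2) by simp
  then have "coth (th_tilde \<theta> * (T - t) / 2) > 1" by (simp add: coth_eq_exp)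
  then have "th_tilde \<theta> * 1 < K \<theta> t"
    unfolding K_def using theta_tilde_pos[of \<theta>] by (intro mult_strict_left_mono)
  then show ?thesis using theta_tilde_gt[OF assms(1)] by simp
qed

lemma continuous_on_K: "s < T \<Longrightarrow> continuous_on {0..s} (K \<theta>)"
  unfolding K_def coth_def using theta_tilde_pos[of \<theta>] by (intro continuous_intros) auto

text \<open>The parameter \<open>c\<close> accounts for the dark pool: \<open>c = -1\<close> for the trajectory \<open>X_tilde\<close>,
  \<open>c = 1\<close> for the expected position (survival factor \<open>exp (- \<theta> t)\<close>) and \<open>c = 0\<close> for the
  risk density \<open>X_tilde\<^sup>2 exp (- \<theta> t)\<close>.\<close>
definition decay :: "real \<Rightarrow> real \<Rightarrow> real \<Rightarrow> real" where
  "decay c \<theta> t = integral {0..t} (\<lambda>s. (K \<theta> s + c * \<theta>) / 2)"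

lemma decay_eq:
  assumes "0 \<le> t" "t < T"
  shows "decay c \<theta> t
    = ln (sinh (th_tilde \<theta> * T / 2)) - ln (sinh (th_tilde \<theta> * (T - t) / 2)) + c * \<theta> * t / 2"
proof -
  define P where "P s = c * \<theta> * s / 2 - ln (sinh (th_tilde \<theta> * (T - s) / 2))" for s
  have "((\<lambda>s. (K \<theta> s + c * \<theta>) / 2) has_integral P t - P 0) {0..t}"
  proof (rule fundamental_theorem_of_calculus[OF assms(1)])
    fix s assume "s \<in> {0..t}"
    then have "sinh (th_tilde \<theta> * (T - s) / 2) > 0" using assms theta_tilde_pos[of \<theta>] by simp
    then have "(P has_real_derivative (K \<theta> s + c * \<theta>) / 2) (at s)"
      unfolding P_def K_def coth_def by (auto intro!: derivative_eq_intros simp: field_simps)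
    then show "(P has_vector_derivative (K \<theta> s + c * \<theta>) / 2) (at s within {0..t})"
      by (simp add: has_real_derivative_iff_has_vector_derivative[symmetric] has_field_derivative_at_within)
  qed
  then have "decay c \<theta> t = P t - P 0" unfolding decay_def by (rule integral_unique)
  then show ?thesis by (simp add: P_def)
qed

lemma decay_strict_mono:
  assumes "0 < t" "t < T" "0 \<le> \<theta>1" "\<theta>1 < \<theta>2" "c \<ge> 0"
  shows "decay c \<theta>1 t < decay c \<theta>2 t"
  unfolding decay_def
proof (rule integral_less_real)
  fix s assume "s \<in> {0<..<t}"
  moreover have "c * \<theta>1 \<le> c * \<theta>2" using assms by (simp add: mult_left_mono)
  ultimately show "(K \<theta>1 s + c * \<theta>1) / 2 < (K \<theta>2 s + c * \<theta>2) / 2"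
    using K_strict_mono[OF assms(3,4), of s] assms(2) by simp
qed (use assms continuous_on_K in \<open>auto intro!: continuous_intros\<close>)

lemma decay_minus_strict_antimono:
  assumes "0 < t" "t < T" "0 \<le> \<theta>1" "\<theta>1 < \<theta>2"
  shows "decay (-1) \<theta>2 t < decay (-1) \<theta>1 t"
  unfolding decay_def
proof (rule integral_less_real)
  fix s assume "s \<in> {0<..<t}"
  then show "(K \<theta>2 s + -1 * \<theta>2) / 2 < (K \<theta>1 s + -1 * \<theta>1) / 2"
    using K_minus_strict_antimono[OF assms(3,4), of s] assms(2) by simp
qed (use assms continuous_on_K in \<open>auto intro!: continuous_intros\<close>)

text \<open>Closed forms of \<open>X_tilde\<close> and \<open>xi_star\<close> along it: unlike \<open>K\<close>, they extend continuously to \<open>t = T\<close>,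
  which makes the cost integrands continuous on \<open>[0, T]\<close>.\<close>
definition X_closed :: "real \<Rightarrow> real \<Rightarrow> real \<Rightarrow> real" where
  "X_closed x \<theta> t
    = x * exp (\<theta> * t / 2) * sinh (th_tilde \<theta> * (T - t) / 2) / sinh (th_tilde \<theta> * T / 2)"

definition xi_closed :: "real \<Rightarrow> real \<Rightarrow> real \<Rightarrow> real" where
  "xi_closed x \<theta> t = x * exp (\<theta> * t / 2)
    * (th_tilde \<theta> / 2 * cosh (th_tilde \<theta> * (T - t) / 2) - \<theta> / 2 * sinh (th_tilde \<theta> * (T - t) / 2))
    / sinh (th_tilde \<theta> * T / 2)"

lemma continuous_on_X_closed [continuous_intros]: "continuous_on S (X_closed x \<theta>)"
  unfolding X_closed_def using theta_tilde_pos[of \<theta>] T_pos by (intro continuous_intros) auto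

lemma continuous_on_xi_closed [continuous_intros]: "continuous_on S (xi_closed x \<theta>)"
  unfolding xi_closed_def using theta_tilde_pos[of \<theta>] T_pos by (intro continuous_intros) auto

lemma X_tilde_eq_decay: "X_tilde T Lam Sig alpha x \<theta> t = x * exp (- decay (-1) \<theta> t)"
  using Lam_pos by (simp add: X_tilde_def decay_def Cfun_eq_K)

lemma X_closed_eq_decay:
  assumes "0 \<le> t" "t < T"
  shows "X_closed x \<theta> t = x * exp (- decay (-1) \<theta> t)"
proof -
  have "sinh (th_tilde \<theta> * T / 2) > 0" "sinh (th_tilde \<theta> * (T - t) / 2) > 0"
    using theta_tilde_pos[of \<theta>] assms by auto
  then show ?thesis by (simp add: X_closed_def decay_eq[OF assms] exp_add exp_diff)
qed

lemma X_tilde_eq_closed: "0 \<le> t \<Longrightarrow> t < T \<Longrightarrow> X_tilde T Lam Sig alpha x \<theta> t = X_closed x \<theta> t"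
  by (simp add: X_tilde_eq_decay X_closed_eq_decay)

lemma xi_closed_eq:
  assumes "0 \<le> t" "t < T"
  shows "xi_closed x \<theta> t = (K \<theta> t - \<theta>) / 2 * X_closed x \<theta> t"
proof -
  have "sinh (th_tilde \<theta> * T / 2) > 0" "sinh (th_tilde \<theta> * (T - t) / 2) > 0"
    using theta_tilde_pos[of \<theta>] assms by auto
  then show ?thesis using assms by (simp add: xi_closed_def X_closed_def K_def coth_def field_simps)
qed

lemma xi_star_X_tilde_eq_closed:
  "0 \<le> t \<Longrightarrow> t < T \<Longrightarrow> xi_star T Lam Sig alpha \<theta> t (X_tilde T Lam Sig alpha x \<theta> t) = xi_closed x \<theta> t"
  using Lam_pos by (simp add: xi_star_def Cfun_eq_K X_tilde_eq_closed xi_closed_eq)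

lemma expected_position_eq:
  assumes "first_jump_time M \<tau> \<theta>" "0 \<le> t" "t < T"
  shows "expected_position T Lam Sig alpha x \<theta> M \<tau> t = x * exp (- decay 1 \<theta> t)"
proof -
  have "expected_position T Lam Sig alpha x \<theta> M \<tau> t
      = (\<integral>\<omega>. (if ereal t < \<tau> \<omega> then X_tilde T Lam Sig alpha x \<theta> t else 0) \<partial>M)"
    by (simp add: expected_position_def X_star_def)
  also have "\<dots> = x * exp (- decay (-1) \<theta> t) * exp (- \<theta> * t)"
    using assms by (simp add: first_jump_time_expectation_survival X_tilde_eq_decay)
  also have "\<dots> = x * exp (- decay 1 \<theta> t)"
    using assms(2,3) by (simp add: decay_eq algebra_simps flip: exp_add)
  finally show ?thesis .
qed

lemma risk_costs_eq:
  assumes "first_jump_time M \<tau> \<theta>"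
  shows "risk_costs T Lam Sig alpha x \<theta> M \<tau>
    = alpha * Sig * integral {0..T} (\<lambda>t. (X_closed x \<theta> t)\<^sup>2 * exp (- \<theta> * t))"
proof -
  have "(LBINT t:{0..<T}. (X_star T Lam Sig alpha x \<theta> (\<tau> \<omega>) t)\<^sup>2)
      = (LBINT t:{0..<T}. (if ereal t < \<tau> \<omega> then (X_closed x \<theta> t)\<^sup>2 else 0))" for \<omega>
    by (rule set_lebesgue_integral_cong) (auto simp: X_star_def X_tilde_eq_closed)
  then show ?thesis
    using first_jump_time_expectation_integral[OF assms _ T_pos, of "\<lambda>t. (X_closed x \<theta> t)\<^sup>2"]
    by (simp add: risk_costs_def continuous_intros)
qed

lemma impact_costs_eq:
  assumes "first_jump_time M \<tau> \<theta>"
  shows "impact_costs T Lam Sig alpha x \<theta> M \<tau>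
    = Lam * integral {0..T} (\<lambda>t. (xi_closed x \<theta> t)\<^sup>2 * exp (- \<theta> * t))"
proof -
  have "(LBINT t:{0..<T}. (xi_star T Lam Sig alpha \<theta> t (X_star T Lam Sig alpha x \<theta> (\<tau> \<omega>) t))\<^sup>2)
      = (LBINT t:{0..<T}. (if ereal t < \<tau> \<omega> then (xi_closed x \<theta> t)\<^sup>2 else 0))" for \<omega>
    by (rule set_lebesgue_integral_cong)
       (auto simp: X_star_def xi_star_X_tilde_eq_closed, simp add: xi_star_def)
  then show ?thesis
    using first_jump_time_expectation_integral[OF assms _ T_pos, of "\<lambda>t. (xi_closed x \<theta> t)\<^sup>2"]
    by (simp add: impact_costs_def continuous_intros)
qed

lemma risk_density_eq:
  assumes "0 \<le> t" "t < T"
  shows "(X_closed x \<theta> t)\<^sup>2 * exp (- \<theta> * t) = x\<^sup>2 * exp (- 2 * decay 0 \<theta> t)"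
  using assms by (simp add: X_closed_eq_decay decay_eq power_mult_distrib algebra_simps
      flip: exp_add exp_of_nat_mult)

lemma Cfun_strict_antimono:
  "t < T \<Longrightarrow> 0 \<le> \<theta>1 \<Longrightarrow> \<theta>1 < \<theta>2 \<Longrightarrow> Cfun T Lam Sig alpha \<theta>2 t < Cfun T Lam Sig alpha \<theta>1 t"
  using K_minus_strict_antimono Lam_pos by (simp add: Cfun_eq_K)

lemma xi_star_strict_antimono:
  "x > 0 \<Longrightarrow> t < T \<Longrightarrow> 0 \<le> \<theta>1 \<Longrightarrow> \<theta>1 < \<theta>2
    \<Longrightarrow> xi_star T Lam Sig alpha \<theta>2 t x < xi_star T Lam Sig alpha \<theta>1 t x"
  using Cfun_strict_antimono Lam_pos by (simp add: xi_star_def divide_strict_right_mono)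

lemma X_tilde_strict_mono:
  "x > 0 \<Longrightarrow> 0 < t \<Longrightarrow> t < T \<Longrightarrow> 0 \<le> \<theta>1 \<Longrightarrow> \<theta>1 < \<theta>2
    \<Longrightarrow> X_tilde T Lam Sig alpha x \<theta>1 t < X_tilde T Lam Sig alpha x \<theta>2 t"
  using decay_minus_strict_antimono by (simp add: X_tilde_eq_decay)

lemma expected_position_strict_antimono:
  assumes "first_jump_time M1 \<tau>1 \<theta>1" "first_jump_time M2 \<tau>2 \<theta>2"
    and "x > 0" "0 < t" "t < T" "0 \<le> \<theta>1" "\<theta>1 < \<theta>2"
  shows "expected_position T Lam Sig alpha x \<theta>2 M2 \<tau>2 t < expected_position T Lam Sig alpha x \<theta>1 M1 \<tau>1 t"
  using assms decay_strict_mono[of t \<theta>1 \<theta>2 1] by (simp add: expected_position_eq)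

lemma risk_density_strict_antimono:
  assumes "x > 0" "0 < t" "t < T" "0 \<le> \<theta>1" "\<theta>1 < \<theta>2"
  shows "(X_closed x \<theta>2 t)\<^sup>2 * exp (- \<theta>2 * t) < (X_closed x \<theta>1 t)\<^sup>2 * exp (- \<theta>1 * t)"
proof -
  have "x\<^sup>2 * exp (- 2 * decay 0 \<theta>2 t) < x\<^sup>2 * exp (- 2 * decay 0 \<theta>1 t)"
    using assms decay_strict_mono[of t \<theta>1 \<theta>2 0] by simp
  then show ?thesis using assms(2,3) by (simp only: risk_density_eq)
qed

lemma impact_density_strict_antimono:
  assumes "x > 0" "0 < t" "t < T" "0 \<le> \<theta>1" "\<theta>1 < \<theta>2"
  shows "(xi_closed x \<theta>2 t)\<^sup>2 * exp (- \<theta>2 * t) < (xi_closed x \<theta>1 t)\<^sup>2 * exp (- \<theta>1 * t)"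
proof -
  have density: "(xi_closed x \<theta> t)\<^sup>2 * exp (- \<theta> * t)
      = ((K \<theta> t - \<theta>) / 2)\<^sup>2 * ((X_closed x \<theta> t)\<^sup>2 * exp (- \<theta> * t))" for \<theta>
    using assms(2,3) by (simp add: xi_closed_eq power2_eq_square)
  have rate: "((K \<theta>2 t - \<theta>2) / 2)\<^sup>2 < ((K \<theta>1 t - \<theta>1) / 2)\<^sup>2"
    using K_minus_strict_antimono[OF assms(4,5,3)] K_minus_pos[of \<theta>2 t] assms
    by (intro power_strict_mono) auto
  show ?thesis
    unfolding density
  proof (rule mult_strict_mono[OF rate risk_density_strict_antimono[OF assms]])
    show "0 < ((K \<theta>1 t - \<theta>1) / 2)\<^sup>2" using le_less_trans[OF zero_le_power2 rate] .
    show "0 \<le> (X_closed x \<theta>2 t)\<^sup>2 * exp (- \<theta>2 * t)" by simp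
  qed
qed

lemma risk_costs_strict_antimono:
  assumes "first_jump_time M1 \<tau>1 \<theta>1" "first_jump_time M2 \<tau>2 \<theta>2"
    and "x > 0" "0 \<le> \<theta>1" "\<theta>1 < \<theta>2"
  shows "risk_costs T Lam Sig alpha x \<theta>2 M2 \<tau>2 < risk_costs T Lam Sig alpha x \<theta>1 M1 \<tau>1"
proof -
  have "integral {0..T} (\<lambda>t. (X_closed x \<theta>2 t)\<^sup>2 * exp (- \<theta>2 * t))
      < integral {0..T} (\<lambda>t. (X_closed x \<theta>1 t)\<^sup>2 * exp (- \<theta>1 * t))"
    using assms T_pos risk_density_strict_antimono
    by (intro integral_less_real) (auto intro!: continuous_intros)
  then show ?thesis
    using mult_strict_left_mono[OF _ risk_pos] assms(1,2) by (simp add: risk_costs_eq)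
qed

lemma impact_costs_strict_antimono:
  assumes "first_jump_time M1 \<tau>1 \<theta>1" "first_jump_time M2 \<tau>2 \<theta>2"
    and "x > 0" "0 \<le> \<theta>1" "\<theta>1 < \<theta>2"
  shows "impact_costs T Lam Sig alpha x \<theta>2 M2 \<tau>2 < impact_costs T Lam Sig alpha x \<theta>1 M1 \<tau>1"
proof -
  have "integral {0..T} (\<lambda>t. (xi_closed x \<theta>2 t)\<^sup>2 * exp (- \<theta>2 * t))
      < integral {0..T} (\<lambda>t. (xi_closed x \<theta>1 t)\<^sup>2 * exp (- \<theta>1 * t))"
    using assms T_pos impact_density_strict_antimono
    by (intro integral_less_real) (auto intro!: continuous_intros)
  then show ?thesis
    using mult_strict_left_mono[OF _ Lam_pos] assms(1,2) by (simp add: impact_costs_eq)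
qed

end

theorem proposition4p1:
  fixes T Lam Sig alpha :: real
  assumes T: "T > 0" and Lam: "Lam > 0" and Sig: "Sig \<ge> 0" and alpha: "alpha \<ge> 0"
    and aS: "alpha * Sig > 0"
  shows
    "(\<forall>t \<in> {0..<T}. \<forall>\<theta>1 \<theta>2. 0 \<le> \<theta>1 \<and> \<theta>1 < \<theta>2 \<longrightarrow>
        Cfun T Lam Sig alpha \<theta>2 t < Cfun T Lam Sig alpha \<theta>1 t)
   \<and> (\<forall>x > 0. \<forall>t \<in> {0..<T}. \<forall>\<theta>1 \<theta>2. 0 \<le> \<theta>1 \<and> \<theta>1 < \<theta>2 \<longrightarrow>
        xi_star T Lam Sig alpha \<theta>2 t x < xi_star T Lam Sig alpha \<theta>1 t x)
   \<and> (\<forall>x > 0. \<forall>t \<in> {0<..<T}. \<forall>\<theta>1 \<theta>2. 0 \<le> \<theta>1 \<and> \<theta>1 < \<theta>2 \<longrightarrow>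
        X_tilde T Lam Sig alpha x \<theta>1 t < X_tilde T Lam Sig alpha x \<theta>2 t)
   \<and> (\<forall>x > 0. \<forall>t \<in> {0<..<T}. \<forall>\<theta>1 \<theta>2 (M1 :: 'a measure) \<tau>1 (M2 :: 'b measure) \<tau>2.
        0 \<le> \<theta>1 \<and> \<theta>1 < \<theta>2 \<and> first_jump_time M1 \<tau>1 \<theta>1 \<and> first_jump_time M2 \<tau>2 \<theta>2 \<longrightarrow>
        expected_position T Lam Sig alpha x \<theta>2 M2 \<tau>2 t
          < expected_position T Lam Sig alpha x \<theta>1 M1 \<tau>1 t)
   \<and> (\<forall>x > 0. \<forall>\<theta>1 \<theta>2 (M1 :: 'a measure) \<tau>1 (M2 :: 'b measure) \<tau>2.
        0 \<le> \<theta>1 \<and> \<theta>1 < \<theta>2 \<and> first_jump_time M1 \<tau>1 \<theta>1 \<and> first_jump_time M2 \<tau>2 \<theta>2 \<longrightarrow>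
        risk_costs T Lam Sig alpha x \<theta>2 M2 \<tau>2 < risk_costs T Lam Sig alpha x \<theta>1 M1 \<tau>1)
   \<and> (\<forall>x > 0. \<forall>\<theta>1 \<theta>2 (M1 :: 'a measure) \<tau>1 (M2 :: 'b measure) \<tau>2.
        0 \<le> \<theta>1 \<and> \<theta>1 < \<theta>2 \<and> first_jump_time M1 \<tau>1 \<theta>1 \<and> first_jump_time M2 \<tau>2 \<theta>2 \<longrightarrow>
        impact_costs T Lam Sig alpha x \<theta>2 M2 \<tau>2 < impact_costs T Lam Sig alpha x \<theta>1 M1 \<tau>1)"
proof -
  interpret dark_pool T Lam Sig alpha using T Lam aS by unfold_locales
  show ?thesis
    by (auto intro: Cfun_strict_antimono xi_star_strict_antimono X_tilde_strict_mono
        expected_position_strict_antimono risk_costs_strict_antimono impact_costs_strict_antimono)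
qed

end
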